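(* (i) Let $B_1,\dots,B_n$ and $C$ be subspaces of a finite-dimensional vector space $W$ over a finite field and let $\alpha\subseteq\{1,\dots,n\}$. Then there exists a subspace $A$ of $W$ with $H(A)=H(C\mid B_j:j\in\alpha)$ and $H(T_A(C)\mid T_A(B_j):j\in\alpha)=0$. (ii) Let $\{B^i_1,\dots,B^i_n,C^i\}_{i=1}^\infty$ be a sequence of collections of subspaces (for each $i$, of a finite-dimensional vector space $W^i$ over a finite field), let $\alpha\subseteq\{1,\dots,n\}$, and let $k(i)>0$ satisfy $\lim_{i\to\infty}\frac{1}{k(i)}H(C^i\mid B^i_j:j\in\alpha)=0$. Then there exist subspaces $A^i$ of $W^i$ such that for every $i$, $H(A^i)=H(C^i\mid B^i_j:j\in\alpha)$ and $H(T_{A^i}(C^i)\mid T_{A^i}(B^i_j):j\in\alpha)=0$, and for all $\beta\subseteq\{1,\dots,n\}$, $\lim_{i\to\infty}\frac{1}{k(i)}H(T_{A^i}(B^i_j):j\in\beta)=\lim_{i\to\infty}\frac{1}{k(i)}H(B^i_j:j\in\beta)$ (in the sense that if either limit exists then both exist and are equal).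
   Context: For subspaces, $\langle\cdots\rangle$ denotes the span. $H(B_j:j\in\beta)=\dim\langle B_j:j\in\beta\rangle$ and $H(\mathcal{S}\mid\mathcal{R})=\dim\langle\mathcal{S},\mathcal{R}\rangle-\dim\langle\mathcal{R}\rangle$. For a subspace $A$ of $W$, choose any subspace $A^*$ with $\langle A,A^*\rangle=W$ and $A\cap A^*=\{0\}$; for $u=u_1+u_2$ with $u_1\in A^*,u_2\in A$ set $T_A(u)=u_1$, and $T_A(B)=\{T_A(u):u\in B\}$ for a subspace $B$. (The dimensions appearing in the statement do not depend on the choice of $A^*$.) *)

theory Defs
  imports "HOL-Analysis.Analysis"
begin

text \<open>All notions are relative to a scalar multiplication sc of a vector space
  (over a field 'f) on an ambient type 'v; W is a subspace playing the role of the
  finite-dimensional space of the paper.\<close>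

definition finite_dim_subspace :: "('f::field \<Rightarrow> 'v::ab_group_add \<Rightarrow> 'v) \<Rightarrow> 'v set \<Rightarrow> bool" where
  "finite_dim_subspace sc W \<longleftrightarrow>
     module.subspace sc W \<and> (\<exists>S. finite S \<and> module.span sc S = W)"

definition subspace_of :: "('f::field \<Rightarrow> 'v::ab_group_add \<Rightarrow> 'v) \<Rightarrow> 'v set \<Rightarrow> 'v set \<Rightarrow> bool" where
  "subspace_of sc W A \<longleftrightarrow> module.subspace sc A \<and> A \<subseteq> W"

definition Hs :: "('f::field \<Rightarrow> 'v::ab_group_add \<Rightarrow> 'v) \<Rightarrow> ('j \<Rightarrow> 'v set) \<Rightarrow> 'j set \<Rightarrow> nat" where
  "Hs sc B \<beta> = vector_space.dim sc (module.span sc (\<Union>j\<in>\<beta>. B j))"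

definition Hcond :: "('f::field \<Rightarrow> 'v::ab_group_add \<Rightarrow> 'v) \<Rightarrow> 'v set \<Rightarrow> ('j \<Rightarrow> 'v set) \<Rightarrow> 'j set \<Rightarrow> nat" where
  "Hcond sc S B \<beta> =
     vector_space.dim sc (module.span sc (S \<union> (\<Union>j\<in>\<beta>. B j)))
     - vector_space.dim sc (module.span sc (\<Union>j\<in>\<beta>. B j))"

definition is_complement :: "('f::field \<Rightarrow> 'v::ab_group_add \<Rightarrow> 'v) \<Rightarrow> 'v set \<Rightarrow> 'v set \<Rightarrow> 'v set \<Rightarrow> bool" where
  "is_complement sc W A Astar \<longleftrightarrow>
     subspace_of sc W Astar \<and> module.span sc (A \<union> Astar) = W \<and> A \<inter> Astar = {0}"

definition TA :: "'v set \<Rightarrow> 'v set \<Rightarrow> 'v::ab_group_add \<Rightarrow> 'v" where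
  "TA A Astar u = (THE u1. u1 \<in> Astar \<and> u - u1 \<in> A)"

definition TA_set :: "'v set \<Rightarrow> 'v set \<Rightarrow> 'v::ab_group_add set \<Rightarrow> 'v set" where
  "TA_set A Astar B = TA A Astar ` B"

definition same_limit :: "(nat \<Rightarrow> real) \<Rightarrow> (nat \<Rightarrow> real) \<Rightarrow> bool" where
  "same_limit f g \<longleftrightarrow> ((convergent f \<or> convergent g) \<longrightarrow>
       (convergent f \<and> convergent g \<and> lim f = lim g))"

end

theory Submission
  imports Defs
begin

text \<open>Extend a basis of \<open>\<langle>B\<^sub>j : j \<in> \<alpha>\<rangle>\<close> to a basis of \<open>\<langle>C, B\<^sub>j : j \<in> \<alpha>\<rangle>\<close> and let \<open>A\<close> be
  spanned by the added vectors. Then \<open>dim A = H(C | B\<^sub>j : j \<in> \<alpha>)\<close> and every vector of \<open>C\<close> is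
  a vector of \<open>\<langle>B\<^sub>j : j \<in> \<alpha>\<rangle>\<close> plus one of \<open>A\<close>. The projection \<open>T\<^sub>A\<close> onto a complement
  along \<open>A\<close> kills \<open>A\<close> and is linear, so \<open>T\<^sub>A(C) \<subseteq> \<langle>T\<^sub>A(B\<^sub>j) : j \<in> \<alpha>\<rangle>\<close>. Moreover
  \<open>T\<^sub>A(X) \<subseteq> \<langle>X, A\<rangle>\<close> and \<open>X \<subseteq> \<langle>T\<^sub>A(X), A\<rangle>\<close> for every \<open>X\<close>, so projecting changes each
  \<open>H(B\<^sub>j : j \<in> \<beta>)\<close> by at most \<open>dim A\<close>, which is \<open>o(k(i))\<close> in part (ii).\<close>

lemma same_limitI:
  fixes f g h :: "nat \<Rightarrow> real"
  assumes "\<And>i. \<bar>f i - g i\<bar> \<le> h i" and "h \<longlonglongrightarrow> 0"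
  shows "same_limit f g"
proof -
  have diff: "(\<lambda>i. f i - g i) \<longlonglongrightarrow> 0"
    by (rule Lim_null_comparison[where g = h]) (use assms in auto)
  have "g \<longlonglongrightarrow> L \<and> lim f = lim g" if "f \<longlonglongrightarrow> L" for L
  proof -
    have "g \<longlonglongrightarrow> L"
      using tendsto_diff[OF that diff] by simp
    with that show ?thesis
      by (simp add: limI)
  qed
  moreover have "f \<longlonglongrightarrow> L \<and> lim f = lim g" if "g \<longlonglongrightarrow> L" for L
  proof -
    have "f \<longlonglongrightarrow> L"
      using tendsto_add[OF that diff] by simp
    with that show ?thesis
      by (simp add: limI)
  qed
  ultimately show ?thesis
    unfolding same_limit_def convergent_def by blast
qed

context vector_space
begin

lemma dim_le_dim_add_dim:
  assumes "finite S" "X \<subseteq> span S" "Y \<subseteq> span S" "V \<subseteq> span (X \<union> Y)"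
  shows "dim V \<le> dim X + dim Y"
proof -
  obtain BX where BX: "BX \<subseteq> X" "independent BX" "X \<subseteq> span BX" "card BX = dim X"
    using basis_exists by blast
  obtain BY where BY: "BY \<subseteq> Y" "independent BY" "Y \<subseteq> span BY" "card BY = dim Y"
    using basis_exists by blast
  have "finite BX" "finite BY"
    using independent_span_bound[OF assms(1)] BX BY assms(2,3) by (meson order_trans)+
  moreover have "span (X \<union> Y) \<subseteq> span (BX \<union> BY)"
    using BX(3) BY(3) by (intro span_minimal) (auto intro: span_mono[THEN subsetD, rotated])
  ultimately have "dim V \<le> card (BX \<union> BY)"
    using assms(4) by (intro dim_le_card) auto
  also have "\<dots> \<le> card BX + card BY"
    by (rule card_Un_le)
  finally show ?thesis
    using BX(4) BY(4) by simp
qed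

lemma exists_complement_of_span_in_span:
  assumes "finite S" "X \<subseteq> span S" "Y \<subseteq> span S"
  obtains A where "subspace A" "A \<subseteq> span (X \<union> Y)" "dim A = dim (X \<union> Y) - dim Y"
    "X \<subseteq> span (Y \<union> A)"
proof -
  obtain BY where BY: "BY \<subseteq> Y" "independent BY" "Y \<subseteq> span BY" "card BY = dim Y"
    using basis_exists by blast
  obtain B where B: "BY \<subseteq> B" "B \<subseteq> X \<union> Y" "independent B" "X \<union> Y \<subseteq> span B"
    using maximal_independent_subset_extend[of BY "X \<union> Y"] BY by blast
  have "finite B"
    using independent_span_bound[OF assms(1) B(3)] B(2) assms(2,3) by blast
  define A where "A = span (B - BY)"
  have "independent (B - BY)"
    using B(3) by (rule independent_mono) blast
  then have "dim A = card (B - BY)"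
    unfolding A_def by (rule dim_span_eq_card_independent)
  also have "\<dots> = dim (X \<union> Y) - dim Y"
    using \<open>finite B\<close> B basis_card_eq_dim[of B "X \<union> Y"] BY(4)
    by (simp add: card_Diff_subset finite_subset)
  finally have "dim A = dim (X \<union> Y) - dim Y" .
  moreover have "B \<subseteq> span (Y \<union> A)"
    using BY(1) span_superset[of "B - BY"] span_superset[of "Y \<union> A"] unfolding A_def by blast
  then have "span B \<subseteq> span (Y \<union> A)"
    by (simp add: span_minimal)
  then have "X \<subseteq> span (Y \<union> A)"
    using B(4) by blast
  moreover have "A \<subseteq> span (X \<union> Y)"
    unfolding A_def using B(2) by (intro span_mono) blast
  ultimately show ?thesis
    using that[of A] unfolding A_def by (simp add: subspace_span)
qed

text \<open>Outside \<open>span (A \<union> As)\<close> the value of \<open>TA\<close> is an unspecified \<open>THE\<close>-term,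
  whence the membership hypotheses below.\<close>

context
  fixes A As :: "'b set"
  assumes subspace_A: "subspace A" and subspace_As: "subspace As" and A_inter_As: "A \<inter> As = {0}"
begin

lemma TA_eqI:
  assumes "v \<in> As" "u - v \<in> A"
  shows "TA A As u = v"
  unfolding TA_def
proof (rule the_equality)
  show "v \<in> As \<and> u - v \<in> A"
    using assms by blast
  fix w assume w: "w \<in> As \<and> u - w \<in> A"
  have "v - w \<in> As"
    using w assms(1) subspace_As by (simp add: subspace_diff)
  moreover have "v - w \<in> A"
    using subspace_diff[OF subspace_A w[THEN conjunct2] assms(2)] by simp
  ultimately have "v - w = 0"
    using A_inter_As by blast
  then show "w = v"
    by simp
qed

lemma TA_decomposition:
  assumes "u \<in> span (A \<union> As)"
  shows "TA A As u \<in> As" "u - TA A As u \<in> A"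
proof -
  have "u \<in> {a + b | a b. a \<in> span A \<and> b \<in> span As}"
    using assms by (simp only: span_Un)
  then obtain a b where "u = a + b" "a \<in> A" "b \<in> As"
    unfolding span_eq_iff[THEN iffD2, OF subspace_A] span_eq_iff[THEN iffD2, OF subspace_As] by blast
  moreover from this have "TA A As u = b"
    by (intro TA_eqI) simp_all
  ultimately show "TA A As u \<in> As" "u - TA A As u \<in> A"
    by simp_all
qed

lemma TA_mem_span_if_mem_span_Un:
  assumes "V \<subseteq> As" "u \<in> span (V \<union> A)"
  shows "TA A As u \<in> span V"
proof -
  have "u \<in> {v + a | v a. v \<in> span V \<and> a \<in> span A}"
    using assms(2) by (simp only: span_Un)
  then obtain v a where v: "u = v + a" "v \<in> span V" "a \<in> A"
    unfolding span_eq_iff[THEN iffD2, OF subspace_A] by blast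
  have "span V \<subseteq> As"
    using assms(1) subspace_As by (rule span_minimal)
  then have "TA A As u = v"
    using v by (intro TA_eqI) auto
  then show ?thesis
    using v(2) by simp
qed

lemma subset_span_TA_image_Un:
  assumes "X \<subseteq> span (A \<union> As)"
  shows "X \<subseteq> span (TA A As ` X \<union> A)"
proof
  fix x assume "x \<in> X"
  then have "TA A As x \<in> span (TA A As ` X \<union> A)" "x - TA A As x \<in> span (TA A As ` X \<union> A)"
    using TA_decomposition(2) assms by (auto intro: span_base)
  then show "x \<in> span (TA A As ` X \<union> A)"
    using span_add by fastforce
qed

lemma TA_image_subset_span_Un:
  assumes "X \<subseteq> span (A \<union> As)"
  shows "TA A As ` X \<subseteq> span (X \<union> A)"
proof
  fix z assume "z \<in> TA A As ` X"
  then obtain x where x: "x \<in> X" "z = TA A As x"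
    by blast
  then have "x \<in> span (X \<union> A)" "x - TA A As x \<in> span (X \<union> A)"
    using TA_decomposition(2) assms by (auto intro: span_base)
  then show "z \<in> span (X \<union> A)"
    using x(2) span_diff by fastforce
qed

end

lemma Hcond_eq_0_if_subset_span:
  assumes "S \<subseteq> span (\<Union>j\<in>\<beta>. B j)"
  shows "Hcond scale S B \<beta> = 0"
proof -
  have "span (S \<union> (\<Union>j\<in>\<beta>. B j)) = span (\<Union>j\<in>\<beta>. B j)"
    using assms by (auto simp: span_eq intro: span_superset[THEN subsetD])
  then show ?thesis
    unfolding Hcond_def by simp
qed

lemma abs_dim_TA_image_diff_le:
  assumes "finite_dim_subspace scale W" "subspace A" "is_complement scale W A As" "X \<subseteq> W"
  shows "\<bar>real (dim (TA A As ` X)) - real (dim X)\<bar> \<le> real (dim A)"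
proof -
  obtain S where S: "finite S" "span S = W"
    using assms(1) unfolding finite_dim_subspace_def by blast
  have As: "subspace As" "span (A \<union> As) = W" "A \<inter> As = {0}"
    using assms(3) unfolding is_complement_def subspace_of_def by auto
  have AW: "A \<subseteq> W" and AsW: "As \<subseteq> W"
    using As(2) span_superset[of "A \<union> As"] by auto
  then have TW: "TA A As ` X \<subseteq> W"
    using TA_decomposition(1)[OF assms(2) As(1,3)] assms(4) As(2) by blast
  have "dim (TA A As ` X) \<le> dim X + dim A"
    using TA_image_subset_span_Un[OF assms(2) As(1,3)] assms(4) As(2) AW S
    by (intro dim_le_dim_add_dim[OF S(1)]) auto
  moreover have "dim X \<le> dim (TA A As ` X) + dim A"
    using subset_span_TA_image_Un[OF assms(2) As(1,3)] assms(4) As(2) AW TW S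
    by (intro dim_le_dim_add_dim[OF S(1)]) auto
  ultimately show ?thesis
    by linarith
qed

lemma abs_Hs_TA_set_diff_le:
  assumes "finite_dim_subspace scale W" "subspace_of scale W A" "is_complement scale W A As"
    and "\<And>j. j \<in> \<beta> \<Longrightarrow> B j \<subseteq> W"
  shows "\<bar>real (Hs scale (\<lambda>j. TA_set A As (B j)) \<beta>) - real (Hs scale B \<beta>)\<bar> \<le> real (dim A)"
proof -
  have "\<bar>real (dim (TA A As ` (\<Union>j\<in>\<beta>. B j))) - real (dim (\<Union>j\<in>\<beta>. B j))\<bar> \<le> real (dim A)"
    using assms by (intro abs_dim_TA_image_diff_le) (auto simp: subspace_of_def)
  then show ?thesis
    by (simp add: Hs_def TA_set_def image_UN)
qed

lemma exists_subspace_Hcond_TA_set_eq_0: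
  assumes W: "finite_dim_subspace scale W" and C: "C \<subseteq> W" and B: "(\<Union>j\<in>\<alpha>. B j) \<subseteq> W"
  shows "\<exists>A. subspace_of scale W A \<and> dim A = Hcond scale C B \<alpha> \<and>
    (\<forall>As. is_complement scale W A As \<longrightarrow>
       Hcond scale (TA_set A As C) (\<lambda>j. TA_set A As (B j)) \<alpha> = 0)"
proof -
  define Y where "Y = (\<Union>j\<in>\<alpha>. B j)"
  obtain S where S: "finite S" "span S = W" "subspace W"
    using W unfolding finite_dim_subspace_def by blast
  have "C \<subseteq> span S" "Y \<subseteq> span S"
    using C B S(2) unfolding Y_def by auto
  then obtain A where A: "subspace A" "A \<subseteq> span (C \<union> Y)" "dim A = dim (C \<union> Y) - dim Y"
    "C \<subseteq> span (Y \<union> A)"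
    by (rule exists_complement_of_span_in_span[OF S(1)])
  have "span (C \<union> Y) \<subseteq> W"
    using C B S(3) unfolding Y_def by (simp add: span_minimal)
  then have "subspace_of scale W A"
    using A(1,2) unfolding subspace_of_def by blast
  moreover have "dim A = Hcond scale C B \<alpha>"
    using A(3) unfolding Hcond_def Y_def by simp
  moreover have "Hcond scale (TA_set A As C) (\<lambda>j. TA_set A As (B j)) \<alpha> = 0"
    if "is_complement scale W A As" for As
  proof -
    have As: "subspace As" "span (A \<union> As) = W" "A \<inter> As = {0}"
      using that unfolding is_complement_def subspace_of_def by auto
    have "Y \<subseteq> span (TA A As ` Y \<union> A)"
      using subset_span_TA_image_Un[OF A(1) As(1,3)] B As(2) unfolding Y_def by simp
    moreover have "A \<subseteq> span (TA A As ` Y \<union> A)"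
      using span_superset by blast
    ultimately have "span (Y \<union> A) \<subseteq> span (TA A As ` Y \<union> A)"
      by (simp add: span_minimal)
    with A(4) have "C \<subseteq> span (TA A As ` Y \<union> A)"
      by (rule order_trans)
    moreover have "TA A As ` Y \<subseteq> As"
      using TA_decomposition(1)[OF A(1) As(1,3)] B As(2) unfolding Y_def by blast
    ultimately have "TA A As ` C \<subseteq> span (TA A As ` Y)"
      using TA_mem_span_if_mem_span_Un[OF A(1) As(1,3)] by blast
    then show ?thesis
      unfolding TA_set_def Y_def image_UN by (rule Hcond_eq_0_if_subset_span)
  qed
  ultimately show ?thesis
    by (intro exI[of _ A]) blast
qed

lemma exists_subspaces_Hcond_TA_set_eq_0_same_limit:
  assumes W: "\<And>i. finite_dim_subspace scale (W i)" and C: "\<And>i. C i \<subseteq> W i"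
    and B: "\<And>i j. j \<in> J \<Longrightarrow> B i j \<subseteq> W i" and "\<alpha> \<subseteq> J"
    and k: "\<And>i. k i > 0" and H: "(\<lambda>i. real (Hcond scale (C i) (B i) \<alpha>) / k i) \<longlonglongrightarrow> 0"
  shows "\<exists>A. (\<forall>i. subspace_of scale (W i) (A i) \<and> dim (A i) = Hcond scale (C i) (B i) \<alpha>) \<and>
    (\<forall>As. (\<forall>i. is_complement scale (W i) (A i) (As i)) \<longrightarrow>
       (\<forall>i. Hcond scale (TA_set (A i) (As i) (C i)) (\<lambda>j. TA_set (A i) (As i) (B i j)) \<alpha> = 0) \<and>
       (\<forall>\<beta>\<subseteq>J. same_limit
          (\<lambda>i. real (Hs scale (\<lambda>j. TA_set (A i) (As i) (B i j)) \<beta>) / k i)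
          (\<lambda>i. real (Hs scale (B i) \<beta>) / k i)))"
proof -
  have "\<exists>A. subspace_of scale (W i) A \<and> dim A = Hcond scale (C i) (B i) \<alpha> \<and>
    (\<forall>As. is_complement scale (W i) A As \<longrightarrow>
       Hcond scale (TA_set A As (C i)) (\<lambda>j. TA_set A As (B i j)) \<alpha> = 0)" for i
    using \<open>\<alpha> \<subseteq> J\<close> B by (intro exists_subspace_Hcond_TA_set_eq_0[OF W C]) blast
  then obtain A where A: "\<forall>i. subspace_of scale (W i) (A i) \<and> dim (A i) = Hcond scale (C i) (B i) \<alpha> \<and>
    (\<forall>As. is_complement scale (W i) (A i) As \<longrightarrow>
       Hcond scale (TA_set (A i) As (C i)) (\<lambda>j. TA_set (A i) As (B i j)) \<alpha> = 0)"
    by (metis choice)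
  have "same_limit (\<lambda>i. real (Hs scale (\<lambda>j. TA_set (A i) (As i) (B i j)) \<beta>) / k i)
      (\<lambda>i. real (Hs scale (B i) \<beta>) / k i)"
    if As: "\<And>i. is_complement scale (W i) (A i) (As i)" and "\<beta> \<subseteq> J" for As \<beta>
  proof (rule same_limitI[OF _ H])
    fix i
    have "\<bar>real (Hs scale (\<lambda>j. TA_set (A i) (As i) (B i j)) \<beta>) - real (Hs scale (B i) \<beta>)\<bar>
        \<le> real (Hcond scale (C i) (B i) \<alpha>)"
      using abs_Hs_TA_set_diff_le[OF W _ As] A B \<open>\<beta> \<subseteq> J\<close> by (metis subsetD)
    then show "\<bar>real (Hs scale (\<lambda>j. TA_set (A i) (As i) (B i j)) \<beta>) / k i
        - real (Hs scale (B i) \<beta>) / k i\<bar> \<le> real (Hcond scale (C i) (B i) \<alpha>) / k i"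
      using k[of i] by (simp add: diff_divide_distrib[symmetric] abs_divide divide_right_mono)
  qed
  then show ?thesis
    using A by blast
qed

end

theorem lemma4:
  fixes sc :: "'f::{field,finite} \<Rightarrow> 'v::ab_group_add \<Rightarrow> 'v"
  assumes "vector_space sc"
  shows
  "(\<forall>(W::'v set) (n::nat) (B::nat \<Rightarrow> 'v set) (C::'v set) (\<alpha>::nat set).
      finite_dim_subspace sc W \<and> (\<forall>j\<in>{1..n}. subspace_of sc W (B j)) \<and>
      subspace_of sc W C \<and> \<alpha> \<subseteq> {1..n} \<longrightarrow>
      (\<exists>A. subspace_of sc W A \<and>
           vector_space.dim sc A = Hcond sc C B \<alpha> \<and>
           (\<forall>Astar. is_complement sc W A Astar \<longrightarrow>
              Hcond sc (TA_set A Astar C) (\<lambda>j. TA_set A Astar (B j)) \<alpha> = 0)))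
   \<and>
   (\<forall>(W::nat \<Rightarrow> 'v set) (n::nat) (B::nat \<Rightarrow> nat \<Rightarrow> 'v set) (C::nat \<Rightarrow> 'v set)
      (\<alpha>::nat set) (k::nat \<Rightarrow> real).
      (\<forall>i. finite_dim_subspace sc (W i) \<and>
           (\<forall>j\<in>{1..n}. subspace_of sc (W i) (B i j)) \<and>
           subspace_of sc (W i) (C i) \<and> k i > 0) \<and>
      \<alpha> \<subseteq> {1..n} \<and>
      (\<lambda>i. real (Hcond sc (C i) (B i) \<alpha>) / k i) \<longlonglongrightarrow> 0 \<longrightarrow>
      (\<exists>A::nat \<Rightarrow> 'v set.
         (\<forall>i. subspace_of sc (W i) (A i) \<and>
              vector_space.dim sc (A i) = Hcond sc (C i) (B i) \<alpha>) \<and>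
         (\<forall>Astar::nat \<Rightarrow> 'v set. (\<forall>i. is_complement sc (W i) (A i) (Astar i)) \<longrightarrow>
            (\<forall>i. Hcond sc (TA_set (A i) (Astar i) (C i))
                   (\<lambda>j. TA_set (A i) (Astar i) (B i j)) \<alpha> = 0) \<and>
            (\<forall>\<beta>\<subseteq>{1..n}.
               same_limit
                 (\<lambda>i. real (Hs sc (\<lambda>j. TA_set (A i) (Astar i) (B i j)) \<beta>) / k i)
                 (\<lambda>i. real (Hs sc (B i) \<beta>) / k i)))))"
proof -
  interpret vector_space sc
    by fact
  show ?thesis
  proof (intro conjI allI impI; elim conjE)
    fix W n B C \<alpha>
    assume "finite_dim_subspace sc W" "\<forall>j\<in>{1..n}. subspace_of sc W (B j)"
      "subspace_of sc W C" "\<alpha> \<subseteq> {1..n}"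
    then show "\<exists>A. subspace_of sc W A \<and> dim A = Hcond sc C B \<alpha> \<and>
      (\<forall>As. is_complement sc W A As \<longrightarrow> Hcond sc (TA_set A As C) (\<lambda>j. TA_set A As (B j)) \<alpha> = 0)"
      by (intro exists_subspace_Hcond_TA_set_eq_0) (auto simp: subspace_of_def)
  next
    fix W n B C \<alpha> and k :: "nat \<Rightarrow> real"
    assume "\<forall>i. finite_dim_subspace sc (W i) \<and> (\<forall>j\<in>{1..n}. subspace_of sc (W i) (B i j)) \<and>
        subspace_of sc (W i) (C i) \<and> k i > 0"
      "\<alpha> \<subseteq> {1..n}" "(\<lambda>i. real (Hcond sc (C i) (B i) \<alpha>) / k i) \<longlonglongrightarrow> 0"
    then show "\<exists>A. (\<forall>i. subspace_of sc (W i) (A i) \<and> dim (A i) = Hcond sc (C i) (B i) \<alpha>) \<and>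
      (\<forall>As. (\<forall>i. is_complement sc (W i) (A i) (As i)) \<longrightarrow>
        (\<forall>i. Hcond sc (TA_set (A i) (As i) (C i)) (\<lambda>j. TA_set (A i) (As i) (B i j)) \<alpha> = 0) \<and>
        (\<forall>\<beta>\<subseteq>{1..n}. same_limit
           (\<lambda>i. real (Hs sc (\<lambda>j. TA_set (A i) (As i) (B i j)) \<beta>) / k i)
           (\<lambda>i. real (Hs sc (B i) \<beta>) / k i)))"
      by (intro exists_subspaces_Hcond_TA_set_eq_0_same_limit) (auto simp: subspace_of_def)
  qed
qed

end
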